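(* Let $T>0$, $\rho>0$, and let $a,b:[0,\infty)\to[0,\infty)$ and $\mathfrak n$ satisfy: $a,b\in\mathcal C^0([0,\infty))\cap\mathcal C^1(0,\infty)$; $a',b'$ bounded on $(1,\infty)$; $a(x)>0$ for $x>0$ and $1/a\in L^1(0,1)$; $\Phi:=b/a$ has a limit $\Phi_0$ at $0^+$ with $\Phi_0<\rho$ and $\Phi'\in L^1(0,1)$; $\mathfrak n$ is nonnegative and continuous on $[\Phi_0,\infty)$. Let $u^{\rm in}\in(\Phi_0,\rho]$ and $\delta>0$ with $2\delta<u^{\rm in}-\Phi_0$, and let $\mathcal B_\delta([0,T))$ be the set of continuous $u:[0,T)\to[0,\rho]$ with $u(0)=u^{\rm in}$ and $\Phi_0+\delta\le u(t)\le\rho$ for all $t\in[0,T)$. For $u\in\mathcal B_\delta([0,T))$ and $x>0$, let $s\mapsto X(s;0,x)$ denote the solution on $[0,T)$ of $\partial_sX(s;0,x)=a(X(s;0,x))u(s)-b(X(s;0,x))$, $X(0;0,x)=x$. Let $\{u^n\}\subset\mathcal B_\delta([0,T))$ converge uniformly to $u$, with corresponding characteristics $X^n$. Then for each $x>0$, $X^n(\cdot;0,x)$ converges uniformly to $X(\cdot;0,x)$ on $[0,T)$ as $n\to\infty$.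
   Context: For such $u$ the characteristic $X(\cdot;0,x)$ exists, is unique and stays in $(0,\infty)$ on the whole interval $[0,T)$. *)

theory Defs
  imports "HOL-Analysis.Analysis"
begin

definition Bdelta :: "real \<Rightarrow> real \<Rightarrow> real \<Rightarrow> real \<Rightarrow> real \<Rightarrow> (real \<Rightarrow> real) set" where
  "Bdelta T \<rho> uin \<Phi>0 \<delta> = {u. continuous_on {0..<T} u \<and> u 0 = uin \<and>
      (\<forall>t\<in>{0..<T}. 0 \<le> u t \<and> \<Phi>0 + \<delta> \<le> u t \<and> u t \<le> \<rho>)}"

definition is_characteristic ::
  "(real \<Rightarrow> real) \<Rightarrow> (real \<Rightarrow> real) \<Rightarrow> real \<Rightarrow> (real \<Rightarrow> real) \<Rightarrow> real \<Rightarrow> (real \<Rightarrow> real) \<Rightarrow> bool" where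
  "is_characteristic a b T u x X \<longleftrightarrow> X 0 = x \<and>
     (\<forall>s\<in>{0..<T}. 0 < X s \<and>
        (X has_real_derivative (a (X s) * u s - b (X s))) (at s within {0..<T}))"

end

theory Submission
  imports Defs
begin

text \<open>Since every admissible control is at least \<Phi>0 + \<delta> and b/a tends to \<Phi>0 at 0, the drift
  a(y) u - b(y) is positive for small y > 0, so all characteristics from x stay above a common
  m > 0; the linear growth of a and Gronwall's inequality give a common upper bound M. On [m, M]
  the coefficients are Lipschitz, so a Gronwall estimate bounds the distance between two
  characteristics by a constant times sup |u_n - u|.\<close>

lemma deriv_nonpos_imp_le_start:
  fixes g g' :: "real \<Rightarrow> real"
  assumes deriv: "\<forall>s\<in>{0..<T}. (g has_real_derivative g' s) (at s within {0..<T})"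
    and nonpos: "\<forall>s\<in>{0..<T}. g' s \<le> 0" and t: "t \<in> {0..<T}"
  shows "g t \<le> g 0"
proof (rule DERIV_nonpos_imp_decreasing_open[of 0 t])
  show "0 \<le> t" using t by simp
  show "continuous_on {0..t} g"
    using DERIV_continuous_on[of "{0..<T}" g g'] deriv t
    by (auto elim!: continuous_on_subset)
  fix s assume s: "0 < s" "s < t"
  have "at s within {0..<T} = at s"
    using s t by (intro at_within_interior) auto
  then show "\<exists>y. (g has_real_derivative y) (at s) \<and> y \<le> 0"
    using deriv nonpos s t by (metis atLeastLessThan_iff less_eq_real_def less_trans)
qed

lemma gronwall_linear:
  fixes Y Y' :: "real \<Rightarrow> real"
  assumes deriv: "\<forall>s\<in>{0..<T}. (Y has_real_derivative Y' s) (at s within {0..<T})"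
    and growth: "\<forall>s\<in>{0..<T}. Y' s \<le> K * (Y s + c)" and t: "t \<in> {0..<T}"
  shows "Y t + c \<le> (Y 0 + c) * exp (K * t)"
proof -
  let ?g = "\<lambda>s. (Y s + c) * exp (- K * s)"
  have "?g t \<le> ?g 0"
  proof (rule deriv_nonpos_imp_le_start[OF _ _ t])
    show "\<forall>s\<in>{0..<T}. (?g has_real_derivative (Y' s - K * (Y s + c)) * exp (- K * s))
        (at s within {0..<T})"
      using deriv by (auto intro!: derivative_eq_intros simp: algebra_simps)
    show "\<forall>s\<in>{0..<T}. (Y' s - K * (Y s + c)) * exp (- K * s) \<le> 0"
      using growth by (simp add: mult_nonpos_nonneg)
  qed
  then have "(Y t + c) * exp (- K * t) * exp (K * t) \<le> (Y 0 + c) * exp (K * t)"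
    by (simp add: mult_right_mono)
  then show ?thesis by (simp add: mult.assoc flip: exp_add)
qed

lemma stays_above_level:
  fixes Y Y' :: "real \<Rightarrow> real"
  assumes deriv: "\<forall>s\<in>{0..<T}. (Y has_real_derivative Y' s) (at s within {0..<T})"
    and increasing_below: "\<forall>s\<in>{0..<T}. Y s < m \<longrightarrow> 0 < Y' s"
    and start: "m \<le> Y 0" and t: "t \<in> {0..<T}"
  shows "m \<le> Y t"
  \<comment> \<open>A minimum point of Y on [0, t] below m would be approached from the left by smaller values.\<close>
proof (rule ccontr)
  assume "\<not> m \<le> Y t"
  have "continuous_on {0..t} Y"
    using DERIV_continuous_on[of "{0..<T}" Y Y'] deriv t by (auto elim!: continuous_on_subset)
  then obtain s where s: "s \<in> {0..t}" and s_min: "\<forall>r\<in>{0..t}. Y s \<le> Y r"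
    using continuous_attains_inf[of "{0..t}" Y] t by auto
  have "Y s < m" using s_min t \<open>\<not> m \<le> Y t\<close> by force
  with start have "0 < s" using s by (cases "s = 0") auto
  have sT: "s \<in> {0..<T}" using s t by auto
  with \<open>Y s < m\<close> have "0 < Y' s" using increasing_below by blast
  then obtain e where e: "e > 0" "\<forall>h>0. s - h \<in> {0..<T} \<longrightarrow> h < e \<longrightarrow> Y (s - h) < Y s"
    using has_real_derivative_pos_inc_left deriv sT by blast
  define h where "h = min (e/2) (s/2)"
  have "0 < h" "h < e" "s - h \<in> {0..<T}" "s - h \<in> {0..t}"
    using e \<open>0 < s\<close> sT s by (auto simp: h_def)
  then have "Y (s - h) < Y s" using e(2) by blast
  moreover have "Y s \<le> Y (s - h)" using s_min \<open>s - h \<in> {0..t}\<close> by blast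
  ultimately show False by simp
qed

lemma lipschitz_on_of_continuous_deriv:
  fixes f :: "real \<Rightarrow> real"
  assumes S: "compact S" "convex S"
    and diff: "\<forall>y\<in>S. f differentiable at y" and cont: "continuous_on S (deriv f)"
  shows "\<exists>L. L-lipschitz_on S f"
proof -
  obtain B where B: "\<forall>y\<in>S. \<bar>deriv f y\<bar> \<le> B"
    using compact_imp_bounded[OF compact_continuous_image[OF cont S(1)]]
    by (auto simp: bounded_iff)
  have "(max B 0)-lipschitz_on S f"
  proof (rule lipschitz_onI)
    have "(f has_real_derivative deriv f y) (at y within S)" if "y \<in> S" for y
      using diff that by (simp add: DERIV_deriv_iff_real_differentiable has_field_derivative_at_within)
    moreover have "norm (deriv f y) \<le> max B 0" if "y \<in> S" for y
      using B that by fastforce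
    moreover fix y z assume "y \<in> S" "z \<in> S"
    ultimately show "dist (f y) (f z) \<le> max B 0 * dist y z"
      unfolding dist_norm by (rule field_differentiable_bound[OF S(2)])
  qed simp
  then show ?thesis ..
qed

lemma linear_growth_of_bounded_deriv:
  fixes f :: "real \<Rightarrow> real"
  assumes cont: "continuous_on {0..1} f" and diff: "\<forall>y\<ge>1. f differentiable at y"
    and deriv_bdd: "\<forall>y>1. \<bar>deriv f y\<bar> \<le> M"
  shows "\<exists>A B. 0 \<le> A \<and> 0 \<le> B \<and> (\<forall>y\<ge>0. f y \<le> A + B * y)"
proof -
  obtain A where A: "\<forall>y\<in>{0..1}. \<bar>f y\<bar> \<le> A"
    using compact_imp_bounded[OF compact_continuous_image[OF cont compact_Icc]]
    by (auto simp: bounded_iff)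
  have "0 \<le> A" using A[rule_format, of 0] by simp
  have "0 \<le> M" using deriv_bdd[rule_format, of 2] by simp
  have "f y \<le> A + M * y" if "0 \<le> y" for y
  proof (cases "y \<le> 1")
    case True
    then show ?thesis using A that \<open>0 \<le> M\<close> by (smt (verit) atLeastAtMost_iff mult_nonneg_nonneg)
  next
    case False
    then obtain z where z: "1 < z" "z < y" "f y - f 1 = (y - 1) * deriv f z"
      using MVT2[of 1 y f "deriv f"] diff by (auto simp: DERIV_deriv_iff_real_differentiable)
    have "(y - 1) * deriv f z \<le> (y - 1) * M"
      using deriv_bdd z False by (intro mult_left_mono) auto
    then show ?thesis using z A[rule_format, of 1] \<open>0 \<le> M\<close> by (simp add: algebra_simps)
  qed
  with \<open>0 \<le> A\<close> \<open>0 \<le> M\<close> show ?thesis by blast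
qed

lemma ode_solutions_dist_le:
  fixes F G :: "real \<Rightarrow> real \<Rightarrow> real" and Y Z :: "real \<Rightarrow> real"
  assumes Y: "\<forall>s\<in>{0..<T}. (Y has_real_derivative F s (Y s)) (at s within {0..<T})"
    and Z: "\<forall>s\<in>{0..<T}. (Z has_real_derivative G s (Z s)) (at s within {0..<T})"
    and same_start: "Y 0 = Z 0"
    and in_S: "\<forall>s\<in>{0..<T}. Y s \<in> S \<and> Z s \<in> S"
    and lipschitz: "\<forall>s\<in>{0..<T}. L-lipschitz_on S (F s)"
    and close: "\<forall>s\<in>{0..<T}. \<forall>y\<in>S. \<bar>F s y - G s y\<bar> \<le> \<eta>"
    and t: "t \<in> {0..<T}"
  shows "\<bar>Y t - Z t\<bar> \<le> \<eta> * exp ((L + 1/2) * t)"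
  \<comment> \<open>Gronwall for the square of d = Y - Z, which unlike |d| is differentiable;
    the perturbation is absorbed by 2 |d| \<eta> \<le> d^2 + \<eta>^2.\<close>
proof -
  define d where "d s = Y s - Z s" for s
  define D where "D s = F s (Y s) - G s (Z s)" for s
  have "0 \<le> \<eta>" using close in_S t by (meson abs_ge_zero order_trans)
  have deriv: "\<forall>s\<in>{0..<T}. ((\<lambda>s. (d s)\<^sup>2) has_real_derivative 2 * d s * D s) (at s within {0..<T})"
  proof
    fix s assume "s \<in> {0..<T}"
    then have "(d has_real_derivative D s) (at s within {0..<T})"
      unfolding d_def D_def using Y Z by (intro DERIV_diff) auto
    from DERIV_power[OF this, of 2]
    show "((\<lambda>s. (d s)\<^sup>2) has_real_derivative 2 * d s * D s) (at s within {0..<T})"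
      by (simp add: ac_simps)
  qed
  have growth: "\<forall>s\<in>{0..<T}. 2 * d s * D s \<le> (2 * L + 1) * ((d s)\<^sup>2 + \<eta>\<^sup>2)"
  proof
    fix s assume s: "s \<in> {0..<T}"
    have "\<bar>F s (Y s) - F s (Z s)\<bar> \<le> L * \<bar>d s\<bar>"
      using lipschitz_onD[of L S "F s" "Y s" "Z s"] lipschitz in_S s by (simp add: d_def dist_real_def)
    moreover have "\<bar>F s (Z s) - G s (Z s)\<bar> \<le> \<eta>" using close in_S s by blast
    ultimately have "\<bar>D s\<bar> \<le> L * \<bar>d s\<bar> + \<eta>" unfolding D_def by linarith
    then have "d s * D s \<le> \<bar>d s\<bar> * (L * \<bar>d s\<bar> + \<eta>)"
      by (metis abs_ge_self abs_ge_zero abs_mult mult_left_mono order_trans)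
    then have "2 * d s * D s \<le> 2 * L * (d s)\<^sup>2 + 2 * \<bar>d s\<bar> * \<eta>"
      by (simp add: algebra_simps power2_eq_square)
    moreover have "2 * \<bar>d s\<bar> * \<eta> \<le> (d s)\<^sup>2 + \<eta>\<^sup>2"
      using sum_squares_bound[of "\<bar>d s\<bar>" \<eta>] by simp
    moreover have "0 \<le> L * \<eta>\<^sup>2"
      using lipschitz_on_nonneg[of L S "F s"] lipschitz s by simp
    ultimately show "2 * d s * D s \<le> (2 * L + 1) * ((d s)\<^sup>2 + \<eta>\<^sup>2)"
      by (simp add: algebra_simps)
  qed
  have "(d t)\<^sup>2 + \<eta>\<^sup>2 \<le> ((d 0)\<^sup>2 + \<eta>\<^sup>2) * exp ((2 * L + 1) * t)"
    by (rule gronwall_linear[OF deriv growth t])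
  also have "\<dots> = (\<eta> * exp ((L + 1/2) * t))\<^sup>2"
  proof -
    have "exp ((2 * L + 1) * t) = (exp ((L + 1/2) * t))\<^sup>2"
      by (simp add: power2_eq_square flip: exp_add)
    then show ?thesis using same_start by (simp add: d_def power_mult_distrib)
  qed
  finally have "\<bar>d t\<bar>\<^sup>2 \<le> (\<eta> * exp ((L + 1/2) * t))\<^sup>2"
    using zero_le_power2[of \<eta>] unfolding power2_abs by linarith
  then show ?thesis
    unfolding d_def by (rule power2_le_imp_le) (use \<open>0 \<le> \<eta>\<close> in simp)
qed

lemma uniform_limit_of_linear_estimate:
  fixes f :: "nat \<Rightarrow> 'a \<Rightarrow> 'c::metric_space" and F :: "nat \<Rightarrow> 'b \<Rightarrow> 'd::metric_space"
  assumes lim: "uniform_limit S f g sequentially"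
    and estimate: "\<And>k \<epsilon>. \<forall>s\<in>S. dist (f k s) (g s) \<le> \<epsilon> \<Longrightarrow> \<forall>t\<in>R. dist (F k t) (G t) \<le> C * \<epsilon>"
  shows "uniform_limit R F G sequentially"
  unfolding uniform_limit_sequentially_iff
proof (intro allI impI)
  fix e :: real assume "0 < e"
  define \<epsilon> where "\<epsilon> = e / (\<bar>C\<bar> + 1)"
  have "0 < \<epsilon>" using \<open>0 < e\<close> by (simp add: \<epsilon>_def)
  then obtain N where N: "\<forall>k\<ge>N. \<forall>s\<in>S. dist (f k s) (g s) < \<epsilon>"
    using lim unfolding uniform_limit_sequentially_iff by blast
  have "C * \<epsilon> \<le> \<bar>C\<bar> * \<epsilon>" using \<open>0 < \<epsilon>\<close> by (intro mult_right_mono) auto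
  also have "\<dots> < e" using \<open>0 < e\<close> by (simp add: \<epsilon>_def field_simps)
  finally have "C * \<epsilon> < e" .
  have "\<forall>t\<in>R. dist (F k t) (G t) < e" if "N \<le> k" for k
    using estimate[of k \<epsilon>] N that \<open>C * \<epsilon> < e\<close> by (meson less_imp_le le_less_trans)
  then show "\<exists>N. \<forall>k\<ge>N. \<forall>t\<in>R. dist (F k t) (G t) < e" by blast
qed

lemma characteristic_ge:
  assumes char: "is_characteristic a b T v x Y"
    and a_nonneg: "\<forall>y>0. 0 \<le> a y"
    and drift_below: "\<forall>y\<in>{0<..<m}. b y < \<kappa> * a y"
    and v_ge: "\<forall>s\<in>{0..<T}. \<kappa> \<le> v s" and "m \<le> x" and t: "t \<in> {0..<T}"
  shows "m \<le> Y t"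
proof (rule stays_above_level[OF _ _ _ t])
  show "\<forall>s\<in>{0..<T}. (Y has_real_derivative a (Y s) * v s - b (Y s)) (at s within {0..<T})"
    using char by (simp add: is_characteristic_def)
  show "\<forall>s\<in>{0..<T}. Y s < m \<longrightarrow> 0 < a (Y s) * v s - b (Y s)"
  proof (intro ballI impI)
    fix s assume s: "s \<in> {0..<T}" and "Y s < m"
    then have "0 < Y s" using char by (simp add: is_characteristic_def)
    with \<open>Y s < m\<close> have "b (Y s) < \<kappa> * a (Y s)" using drift_below by simp
    also have "\<dots> \<le> v s * a (Y s)"
      using v_ge s a_nonneg \<open>0 < Y s\<close> by (simp add: mult_right_mono)
    finally show "0 < a (Y s) * v s - b (Y s)" by (simp add: mult.commute)
  qed
  show "m \<le> Y 0" using char \<open>m \<le> x\<close> by (simp add: is_characteristic_def)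
qed

lemma characteristic_le:
  assumes char: "is_characteristic a b T v x Y"
    and a_nonneg: "\<forall>y>0. 0 \<le> a y" and b_nonneg: "\<forall>y>0. 0 \<le> b y"
    and a_growth: "\<forall>y>0. a y \<le> A + B * y" and "0 \<le> A" "0 \<le> B"
    and v_le: "\<forall>s\<in>{0..<T}. v s \<le> \<rho>" and "0 \<le> \<rho>" and t: "t \<in> {0..<T}"
  shows "Y t \<le> (x + \<rho> * A) * exp ((\<rho> * B + 1) * T)"
proof -
  have Y0: "Y 0 = x" and Y_pos: "\<forall>s\<in>{0..<T}. 0 < Y s"
    and Y': "\<forall>s\<in>{0..<T}. (Y has_real_derivative a (Y s) * v s - b (Y s)) (at s within {0..<T})"
    using char by (auto simp: is_characteristic_def)
  have "\<forall>s\<in>{0..<T}. a (Y s) * v s - b (Y s) \<le> (\<rho> * B + 1) * (Y s + \<rho> * A)"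
  proof
    fix s assume s: "s \<in> {0..<T}"
    then have "0 < Y s" using Y_pos by blast
    have "a (Y s) * v s - b (Y s) \<le> a (Y s) * \<rho>"
      using b_nonneg a_nonneg v_le s \<open>0 < Y s\<close> by (smt (verit) mult_left_mono)
    also have "\<dots> \<le> (A + B * Y s) * \<rho>"
      using a_growth \<open>0 < Y s\<close> \<open>0 \<le> \<rho>\<close> by (simp add: mult_right_mono)
    also have "\<dots> \<le> (\<rho> * B + 1) * (Y s + \<rho> * A)"
      using \<open>0 < Y s\<close> \<open>0 \<le> \<rho>\<close> \<open>0 \<le> A\<close> \<open>0 \<le> B\<close>
      by (simp add: algebra_simps add_increasing mult_nonneg_nonneg)
    finally show "a (Y s) * v s - b (Y s) \<le> (\<rho> * B + 1) * (Y s + \<rho> * A)" .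
  qed
  from gronwall_linear[OF Y' this t]
  have "Y t + \<rho> * A \<le> (x + \<rho> * A) * exp ((\<rho> * B + 1) * t)" using Y0 by simp
  also have "\<dots> \<le> (x + \<rho> * A) * exp ((\<rho> * B + 1) * T)"
    using t Y0 Y_pos[rule_format, of 0] \<open>0 \<le> \<rho>\<close> \<open>0 \<le> A\<close> \<open>0 \<le> B\<close>
    by (intro mult_left_mono) (auto intro!: mult_left_mono)
  finally show ?thesis using \<open>0 \<le> \<rho>\<close> \<open>0 \<le> A\<close> by (smt (verit) mult_nonneg_nonneg)
qed

lemma characteristic_dist_le:
  assumes char1: "is_characteristic a b T v1 x Y1" and char2: "is_characteristic a b T v2 x Y2"
    and in_S: "\<forall>s\<in>{0..<T}. Y1 s \<in> S \<and> Y2 s \<in> S"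
    and a_lipschitz: "La-lipschitz_on S a" and b_lipschitz: "Lb-lipschitz_on S b"
    and a_bdd: "\<forall>y\<in>S. \<bar>a y\<bar> \<le> A"
    and v1_bdd: "\<forall>s\<in>{0..<T}. \<bar>v1 s\<bar> \<le> \<rho>" and v_close: "\<forall>s\<in>{0..<T}. \<bar>v1 s - v2 s\<bar> \<le> \<epsilon>"
    and t: "t \<in> {0..<T}"
  shows "\<bar>Y1 t - Y2 t\<bar> \<le> A * exp ((\<rho> * La + Lb + 1/2) * T) * \<epsilon>"
proof -
  have "\<bar>Y1 t - Y2 t\<bar> \<le> (A * \<epsilon>) * exp ((\<rho> * La + Lb + 1/2) * t)"
  proof (rule ode_solutions_dist_le[where F = "\<lambda>s y. a y * v1 s - b y"
        and G = "\<lambda>s y. a y * v2 s - b y" and S = S, OF _ _ _ in_S _ _ t])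
    show "\<forall>s\<in>{0..<T}. (Y1 has_real_derivative a (Y1 s) * v1 s - b (Y1 s)) (at s within {0..<T})"
      "\<forall>s\<in>{0..<T}. (Y2 has_real_derivative a (Y2 s) * v2 s - b (Y2 s)) (at s within {0..<T})"
      "Y1 0 = Y2 0"
      using char1 char2 by (simp_all add: is_characteristic_def)
    show "\<forall>s\<in>{0..<T}. (\<rho> * La + Lb)-lipschitz_on S (\<lambda>y. a y * v1 s - b y)"
    proof
      fix s assume "s \<in> {0..<T}"
      then have "(\<rho> * La + Lb)-lipschitz_on S (\<lambda>y. v1 s * a y - b y)"
        using v1_bdd by (intro lipschitz_on_diff lipschitz_on_cmult_real_upper a_lipschitz b_lipschitz) auto
      then show "(\<rho> * La + Lb)-lipschitz_on S (\<lambda>y. a y * v1 s - b y)"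
        by (simp add: mult.commute)
    qed
    show "\<forall>s\<in>{0..<T}. \<forall>y\<in>S. \<bar>a y * v1 s - b y - (a y * v2 s - b y)\<bar> \<le> A * \<epsilon>"
    proof (intro ballI)
      fix s y assume "s \<in> {0..<T}" "y \<in> S"
      then have "\<bar>a y\<bar> * \<bar>v1 s - v2 s\<bar> \<le> A * \<epsilon>"
        using a_bdd v_close by (intro mult_mono) auto
      moreover have "a y * v1 s - b y - (a y * v2 s - b y) = a y * (v1 s - v2 s)"
        by (simp add: algebra_simps)
      ultimately show "\<bar>a y * v1 s - b y - (a y * v2 s - b y)\<bar> \<le> A * \<epsilon>"
        by (simp add: abs_mult)
    qed
  qed
  also have "\<dots> \<le> (A * \<epsilon>) * exp ((\<rho> * La + Lb + 1/2) * T)"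
  proof (rule mult_left_mono)
    have "0 \<le> \<rho>" using v1_bdd t by (meson abs_ge_zero order_trans)
    moreover have "0 \<le> La" "0 \<le> Lb"
      using a_lipschitz b_lipschitz by (simp_all add: lipschitz_on_nonneg)
    ultimately
    show "exp ((\<rho> * La + Lb + 1/2) * t) \<le> exp ((\<rho> * La + Lb + 1/2) * T)"
      using t by (simp add: mult_left_mono)
    have "0 \<le> A" using a_bdd in_S t by (meson abs_ge_zero order_trans)
    moreover have "0 \<le> \<epsilon>" using v_close t by (meson abs_ge_zero order_trans)
    ultimately show "0 \<le> A * \<epsilon>" by simp
  qed
  finally show ?thesis by (simp add: ac_simps)
qed

lemma characteristics_uniformly_bounded:
  fixes a b :: "real \<Rightarrow> real"
  assumes a_pos: "\<forall>y>0. 0 < a y" and b_nonneg: "\<forall>y>0. 0 \<le> b y"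
    and a_cont: "continuous_on {0..1} a" and a_diff: "\<forall>y\<ge>1. a differentiable at y"
    and a'_bdd: "\<forall>y>1. \<bar>deriv a y\<bar> \<le> C"
    and Phi_lim: "((\<lambda>y. b y / a y) \<longlongrightarrow> \<Phi>0) (at_right 0)" and "\<Phi>0 < \<kappa>"
    and "0 \<le> \<rho>" and "0 < x"
  shows "\<exists>m M. 0 < m \<and> (\<forall>v Y. (\<forall>s\<in>{0..<T}. \<kappa> \<le> v s \<and> v s \<le> \<rho>) \<longrightarrow>
           is_characteristic a b T v x Y \<longrightarrow> (\<forall>t\<in>{0..<T}. Y t \<in> {m..M}))"
proof -
  have "\<forall>\<^sub>F y in at_right 0. b y / a y < \<kappa>"
    using order_tendstoD(2)[OF Phi_lim \<open>\<Phi>0 < \<kappa>\<close>] .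
  then obtain \<eta> where "0 < \<eta>" and Phi_below: "\<forall>y>0. y < \<eta> \<longrightarrow> b y / a y < \<kappa>"
    by (auto simp: eventually_at_right_field)
  have drift_below: "\<forall>y\<in>{0<..<min x \<eta>}. b y < \<kappa> * a y"
    using Phi_below a_pos by (simp add: pos_divide_less_eq)
  obtain A B where "0 \<le> A" "0 \<le> B" and a_growth: "\<forall>y\<ge>0. a y \<le> A + B * y"
    using linear_growth_of_bounded_deriv[OF a_cont a_diff a'_bdd] by blast
  have "min x \<eta> \<le> Y t \<and> Y t \<le> (x + \<rho> * A) * exp ((\<rho> * B + 1) * T)"
    if "\<forall>s\<in>{0..<T}. \<kappa> \<le> v s \<and> v s \<le> \<rho>" "is_characteristic a b T v x Y" "t \<in> {0..<T}"
    for v Y t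
    using characteristic_ge[OF that(2) _ drift_below _ _ that(3)]
      characteristic_le[OF that(2) _ _ _ \<open>0 \<le> A\<close> \<open>0 \<le> B\<close> _ \<open>0 \<le> \<rho>\<close> that(3)]
      that(1) a_pos b_nonneg a_growth by (simp add: less_imp_le)
  moreover have "0 < min x \<eta>" using \<open>0 < x\<close> \<open>0 < \<eta>\<close> by simp
  ultimately show ?thesis
    by (intro exI[of _ "min x \<eta>"] exI[of _ "(x + \<rho> * A) * exp ((\<rho> * B + 1) * T)"]) auto
qed

lemma characteristics_lipschitz_in_control:
  fixes a b :: "real \<Rightarrow> real"
  assumes a_pos: "\<forall>y>0. 0 < a y" and b_nonneg: "\<forall>y>0. 0 \<le> b y"
    and a_cont: "continuous_on {0..} a"
    and a_diff: "\<forall>y>0. a differentiable at y" and b_diff: "\<forall>y>0. b differentiable at y"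
    and a'_cont: "continuous_on {0<..} (deriv a)" and b'_cont: "continuous_on {0<..} (deriv b)"
    and a'_bdd: "\<forall>y>1. \<bar>deriv a y\<bar> \<le> C"
    and Phi_lim: "((\<lambda>y. b y / a y) \<longlongrightarrow> \<Phi>0) (at_right 0)" and kappa: "\<Phi>0 < \<kappa>"
    and rho: "0 \<le> \<rho>" and x: "0 < x"
  shows "\<exists>K. \<forall>v w Y Z \<epsilon>. (\<forall>s\<in>{0..<T}. \<kappa> \<le> v s \<and> v s \<le> \<rho>) \<longrightarrow>
           (\<forall>s\<in>{0..<T}. \<kappa> \<le> w s \<and> w s \<le> \<rho>) \<longrightarrow>
           is_characteristic a b T v x Y \<longrightarrow> is_characteristic a b T w x Z \<longrightarrow>
           (\<forall>s\<in>{0..<T}. \<bar>v s - w s\<bar> \<le> \<epsilon>) \<longrightarrow> (\<forall>t\<in>{0..<T}. \<bar>Y t - Z t\<bar> \<le> K * \<epsilon>)"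
proof -
  obtain m M where "0 < m" and char_bounds: "\<forall>v Y. (\<forall>s\<in>{0..<T}. \<kappa> \<le> v s \<and> v s \<le> \<rho>) \<longrightarrow>
      is_characteristic a b T v x Y \<longrightarrow> (\<forall>t\<in>{0..<T}. Y t \<in> {m..M})"
    using characteristics_uniformly_bounded[OF a_pos b_nonneg _ _ a'_bdd Phi_lim kappa rho x, where T = T]
      continuous_on_subset[OF a_cont] a_diff
    by (auto simp: subset_eq)
  have "\<forall>y\<in>{m..M}. a differentiable at y" "\<forall>y\<in>{m..M}. b differentiable at y"
    "continuous_on {m..M} (deriv a)" "continuous_on {m..M} (deriv b)" "continuous_on {m..M} a"
    using a_diff b_diff continuous_on_subset[OF a'_cont] continuous_on_subset[OF b'_cont]
      continuous_on_subset[OF a_cont] \<open>0 < m\<close>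
    by (auto simp: subset_eq)
  then obtain La Lb where "La-lipschitz_on {m..M} a" "Lb-lipschitz_on {m..M} b"
    using lipschitz_on_of_continuous_deriv[OF compact_Icc convex_closed_interval] by metis
  obtain A where "\<forall>y\<in>{m..M}. \<bar>a y\<bar> \<le> A"
    using compact_imp_bounded[OF compact_continuous_image[OF \<open>continuous_on {m..M} a\<close> compact_Icc]]
    by (auto simp: bounded_iff)
  define R where "R = max \<rho> \<bar>\<kappa>\<bar>"
  have "\<bar>Y t - Z t\<bar> \<le> A * exp ((R * La + Lb + 1/2) * T) * \<epsilon>"
    if v: "\<forall>s\<in>{0..<T}. \<kappa> \<le> v s \<and> v s \<le> \<rho>" and w: "\<forall>s\<in>{0..<T}. \<kappa> \<le> w s \<and> w s \<le> \<rho>"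
      and Y: "is_characteristic a b T v x Y" and Z: "is_characteristic a b T w x Z"
      and close: "\<forall>s\<in>{0..<T}. \<bar>v s - w s\<bar> \<le> \<epsilon>" and t: "t \<in> {0..<T}"
    for v w Y Z \<epsilon> t
  proof (rule characteristic_dist_le[OF Y Z _ \<open>La-lipschitz_on {m..M} a\<close>
        \<open>Lb-lipschitz_on {m..M} b\<close> \<open>\<forall>y\<in>{m..M}. \<bar>a y\<bar> \<le> A\<close> _ close t])
    show "\<forall>s\<in>{0..<T}. Y s \<in> {m..M} \<and> Z s \<in> {m..M}"
      using char_bounds v w Y Z by blast
    show "\<forall>s\<in>{0..<T}. \<bar>v s\<bar> \<le> R"
      using v by (auto simp: R_def abs_le_iff)
  qed
  then show ?thesis by blast
qed

theorem mainTheorem6: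
  fixes T \<rho> \<Phi>0 uin \<delta> x :: real
    and a b nn :: "real \<Rightarrow> real"
    and un :: "nat \<Rightarrow> real \<Rightarrow> real" and u :: "real \<Rightarrow> real"
    and Xn :: "nat \<Rightarrow> real \<Rightarrow> real" and X :: "real \<Rightarrow> real"
  assumes T_pos: "T > 0" and rho_pos: "\<rho> > 0"
    and a_nonneg: "\<forall>y\<ge>0. a y \<ge> 0" and b_nonneg: "\<forall>y\<ge>0. b y \<ge> 0"
    and a_cont: "continuous_on {0..} a" and b_cont: "continuous_on {0..} b"
    and a_diff: "\<forall>y>0. a differentiable at y" and b_diff: "\<forall>y>0. b differentiable at y"
    and a'_cont: "continuous_on {0<..} (deriv a)" and b'_cont: "continuous_on {0<..} (deriv b)"
    and a'_bdd: "\<exists>M. \<forall>y>1. \<bar>deriv a y\<bar> \<le> M"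
    and b'_bdd: "\<exists>M. \<forall>y>1. \<bar>deriv b y\<bar> \<le> M"
    and a_pos: "\<forall>y>0. a y > 0"
    and inv_a_L1: "(\<lambda>y. 1 / a y) absolutely_integrable_on {0<..<1}"
    and Phi_lim: "((\<lambda>y. b y / a y) \<longlongrightarrow> \<Phi>0) (at_right 0)"
    and Phi0_lt: "\<Phi>0 < \<rho>"
    and Phi'_L1: "deriv (\<lambda>y. b y / a y) absolutely_integrable_on {0<..<1}"
    and nn_nonneg: "\<forall>y\<ge>\<Phi>0. nn y \<ge> 0" and nn_cont: "continuous_on {\<Phi>0..} nn"
    and uin: "\<Phi>0 < uin" "uin \<le> \<rho>"
    and delta: "\<delta> > 0" "2 * \<delta> < uin - \<Phi>0"
    and un_B: "\<forall>k. un k \<in> Bdelta T \<rho> uin \<Phi>0 \<delta>"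
    and un_conv: "uniform_limit {0..<T} un u sequentially"
    and x_pos: "x > 0"
    and Xn_char: "\<forall>k. is_characteristic a b T (un k) x (Xn k)"
    and X_char: "is_characteristic a b T u x X"
  shows "uniform_limit {0..<T} Xn X sequentially"
proof -
  have un_bounds: "\<forall>s\<in>{0..<T}. \<Phi>0 + \<delta> \<le> un k s \<and> un k s \<le> \<rho>" for k
    using un_B by (simp add: Bdelta_def)
  have u_bounds: "\<forall>s\<in>{0..<T}. \<Phi>0 + \<delta> \<le> u s \<and> u s \<le> \<rho>"
  proof
    fix s assume "s \<in> {0..<T}"
    then have "u s \<in> {\<Phi>0 + \<delta>..\<rho>}"
      using un_bounds by (intro Lim_in_closed_set[OF _ _ _ tendsto_uniform_limitI[OF un_conv]]) auto
    then show "\<Phi>0 + \<delta> \<le> u s \<and> u s \<le> \<rho>" by simp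
  qed
  obtain C where "\<forall>y>1. \<bar>deriv a y\<bar> \<le> C" using a'_bdd by blast
  then obtain K where K: "\<forall>v w Y Z \<epsilon>. (\<forall>s\<in>{0..<T}. \<Phi>0 + \<delta> \<le> v s \<and> v s \<le> \<rho>) \<longrightarrow>
      (\<forall>s\<in>{0..<T}. \<Phi>0 + \<delta> \<le> w s \<and> w s \<le> \<rho>) \<longrightarrow>
      is_characteristic a b T v x Y \<longrightarrow> is_characteristic a b T w x Z \<longrightarrow>
      (\<forall>s\<in>{0..<T}. \<bar>v s - w s\<bar> \<le> \<epsilon>) \<longrightarrow> (\<forall>t\<in>{0..<T}. \<bar>Y t - Z t\<bar> \<le> K * \<epsilon>)"
    using characteristics_lipschitz_in_control[of a b C \<Phi>0 "\<Phi>0 + \<delta>" \<rho> x T] a_pos b_nonneg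
      a_cont a_diff b_diff a'_cont b'_cont Phi_lim delta(1) rho_pos x_pos
    by auto
  show ?thesis
  proof (rule uniform_limit_of_linear_estimate[OF un_conv])
    fix k \<epsilon> assume "\<forall>s\<in>{0..<T}. dist (un k s) (u s) \<le> \<epsilon>"
    then show "\<forall>t\<in>{0..<T}. dist (Xn k t) (X t) \<le> K * \<epsilon>"
      using K[rule_format, OF un_bounds[rule_format] u_bounds[rule_format] Xn_char[rule_format] X_char]
      by (simp add: dist_real_def)
  qed
qed

end
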